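(* For any $n\ge0$ and $q\ge1$, let $\mathcal{A}^+$ (resp. $\mathcal{A}^-$) be the set of words of $\mathcal{W}^q_n$ having an even (resp. odd) number of letters $1$. Then $|\mathcal{A}^+|-|\mathcal{A}^-|\in\{-1,0,1\}$.
   Context: For $q\ge1$, a binary word is $q$-decreasing if for every maximal run of $0$s, of length $a>0$, together with the (possibly empty) maximal run of $1$s immediately following it, of length $b$, one has $q\cdot a>b$; $\mathcal{W}^q_n$ is the set of $q$-decreasing words of length $n$. *)

theory Defs
  imports Main
begin

text \<open>A word is q-decreasing if for every maximal run of 0s (of length a > 0),
starting at position i, the maximal run of 1s immediately following it
(of length b, possibly 0) satisfies q * a > b.\<close>

definition q_decreasing :: "nat \<Rightarrow> nat list \<Rightarrow> bool" where
  "q_decreasing q w \<longleftrightarrow>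
     (\<forall>i < length w. (w ! i = 0 \<and> (i = 0 \<or> w ! (i - 1) \<noteq> 0)) \<longrightarrow>
        (let a = length (takeWhile (\<lambda>x. x = 0) (drop i w));
             b = length (takeWhile (\<lambda>x. x = 1) (drop (i + a) w))
         in q * a > b))"

definition qdec_words :: "nat \<Rightarrow> nat \<Rightarrow> nat list set" where
  "qdec_words q n = {w. length w = n \<and> set w \<subseteq> {0, 1} \<and> q_decreasing q w}"

definition num_ones :: "nat list \<Rightarrow> nat" where
  "num_ones w = length (filter (\<lambda>x. x = 1) w)"

end

theory Submission
  imports Defs
begin

text \<open>Let \<open>S(n)\<close> be the signed count \<open>\<Sum>(-1)^(number of 1s)\<close> over q-decreasing words of
  length \<open>n\<close>, and \<open>E(n)\<close> the same sum over those that are empty or end in 1. Appending 0 never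
  breaks q-decreasingness, so \<open>E(n+1) = S(n+1) - S(n)\<close>; appending 1 breaks it exactly for the
  words \<open>u 0^a 1^(qa-1)\<close> with \<open>u\<close> counted by \<open>E\<close>. Hence
  \<open>S(n+1) = \<Sum>a\<ge>1. (-1)^(qa-1) E(n+1-(q+1)a)\<close>, which telescopes to
  \<open>S(n) = (-1)^q S(n-q-2)\<close>. With \<open>S(0) = 1\<close>, \<open>S(1) = \<dots> = S(q) = 0\<close> and
  \<open>S(q+1) = (-1)^(q-1)\<close> this gives \<open>|S(n)| \<le> 1\<close>.\<close>

definition leading_run_ok :: "nat \<Rightarrow> nat list \<Rightarrow> bool" where
  "leading_run_ok q u \<longleftrightarrow>
     (let a = length (takeWhile (\<lambda>x. x = 0) u)
      in length (takeWhile (\<lambda>x. x = 1) (drop a u)) < q * a)"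

text \<open>The flag \<open>c\<close> says whether a 0 at the head of the word starts a maximal run of 0s.\<close>

fun q_decreasing_from :: "nat \<Rightarrow> bool \<Rightarrow> nat list \<Rightarrow> bool" where
  "q_decreasing_from q c [] = True"
| "q_decreasing_from q c (x # w) \<longleftrightarrow>
     (x = 0 \<and> c \<longrightarrow> leading_run_ok q (x # w)) \<and> q_decreasing_from q (x \<noteq> 0) w"

lemma q_decreasing_from_iff:
  "q_decreasing_from q c w \<longleftrightarrow>
     (\<forall>i<length w. w ! i = 0 \<and> (i = 0 \<and> c \<or> i > 0 \<and> w ! (i - 1) \<noteq> 0)
        \<longrightarrow> leading_run_ok q (drop i w))"
proof (induction w arbitrary: c)
  case Nil
  then show ?case by simp
next
  case (Cons x w)
  show ?case
    unfolding length_Cons All_less_Suc2 q_decreasing_from.simps Cons.IH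
    by (simp only: nth_Cons_0 nth_Cons_Suc drop0 drop_Suc_Cons diff_Suc_1 simp_thms)
      (intro conj_cong refl all_cong imp_cong; auto simp: nth_Cons')
qed

lemma q_decreasing_iff_from: "q_decreasing q w \<longleftrightarrow> q_decreasing_from q True w"
  unfolding q_decreasing_def q_decreasing_from_iff leading_run_ok_def Let_def
  by (intro all_cong) (auto simp: add.commute)

lemma leading_run_ok_append:
  assumes "z \<noteq> []" "last z = 1" "v = [] \<or> hd v = 0"
  shows "leading_run_ok q (z @ v) \<longleftrightarrow> leading_run_ok q z"
proof -
  define a where "a = length (takeWhile (\<lambda>x. x = 0) z)"
  have "takeWhile (\<lambda>x. x = 0) (z @ v) = takeWhile (\<lambda>x. x = 0) z"
    using assms(1,2) last_in_set by fastforce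
  moreover have "takeWhile (\<lambda>x. x = 1) (drop a z @ v) = takeWhile (\<lambda>x. x = 1) (drop a z)"
    using assms(3)
    by (cases v) (auto simp: takeWhile_append intro: takeWhile_eq_all_conv[THEN iffD2, symmetric])
  moreover have "a \<le> length z"
    by (simp add: a_def length_takeWhile_le)
  ultimately show ?thesis
    by (simp add: leading_run_ok_def a_def)
qed

lemma q_decreasing_from_append:
  assumes "z \<noteq> []" "last z = 1" "v = [] \<or> hd v = 0"
  shows "q_decreasing_from q c (z @ v) \<longleftrightarrow> q_decreasing_from q c z \<and> q_decreasing_from q True v"
  using assms
proof (induction z arbitrary: c)
  case Nil
  then show ?case by simp
next
  case (Cons y z)
  show ?case
  proof (cases "z = []")
    case True
    then show ?thesis using Cons.prems by simp
  next
    case False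
    have "leading_run_ok q ((y # z) @ v) \<longleftrightarrow> leading_run_ok q (y # z)"
      by (rule leading_run_ok_append) (use Cons.prems in auto)
    then show ?thesis using Cons.IH[OF False _ Cons.prems(3)] Cons.prems(2) False by auto
  qed
qed

lemma q_decreasing_from_replicate_nonzero:
  "x \<noteq> 0 \<Longrightarrow> q_decreasing_from q c (replicate k x)"
  by (induction k arbitrary: c) auto

lemma leading_run_ok_block: "leading_run_ok q (replicate a 0 @ replicate b 1) \<longleftrightarrow> b < q * a"
proof -
  have "takeWhile (\<lambda>x. x = 0) (replicate a 0 @ replicate b (1::nat)) = replicate a 0"
    by (cases b) (simp_all add: takeWhile_append)
  then show ?thesis
    by (simp add: leading_run_ok_def)
qed

lemma q_decreasing_from_block:
  assumes "a \<ge> 1"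
  shows "q_decreasing_from q True (replicate a 0 @ replicate b 1) \<longleftrightarrow> b < q * a"
proof -
  have "q_decreasing_from q False (replicate k 0 @ replicate b 1)" for k
    by (induction k) (auto simp: q_decreasing_from_replicate_nonzero)
  moreover obtain a' where "a = Suc a'"
    using assms by (cases a) auto
  ultimately show ?thesis
    using leading_run_ok_block[of q a b] by simp
qed

lemma q_decreasing_append_block:
  assumes "u = [] \<or> last u = 1" "a \<ge> 1"
  shows "q_decreasing q (u @ replicate a 0 @ replicate b 1) \<longleftrightarrow> q_decreasing q u \<and> b < q * a"
proof (cases "u = []")
  case True
  then show ?thesis
    using q_decreasing_from_block[OF assms(2)] by (simp add: q_decreasing_iff_from)
next
  case False
  have "hd (replicate a 0 @ replicate b (1::nat)) = 0"
    using assms(2) by (cases a) auto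
  then show ?thesis
    using q_decreasing_from_append[OF False, of "replicate a 0 @ replicate b 1" q True] assms False
      q_decreasing_from_block[OF assms(2)] by (simp add: q_decreasing_iff_from)
qed

lemma q_decreasing_replicate_nonzero: "x \<noteq> 0 \<Longrightarrow> q_decreasing q (replicate k x)"
  by (simp add: q_decreasing_iff_from q_decreasing_from_replicate_nonzero)

lemma split_trailing_run: "\<exists>v b. w = v @ replicate b x \<and> (v = [] \<or> last v \<noteq> x)"
proof (induction w rule: rev_induct)
  case Nil
  show ?case by simp
next
  case (snoc y w)
  then obtain v b where w: "w = v @ replicate b x" and v: "v = [] \<or> last v \<noteq> x"
    by blast
  show ?case
  proof (cases "y = x")
    case True
    then have "w @ [y] = v @ replicate (Suc b) x"
      using w by (simp add: replicate_append_same)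
    then show ?thesis using v by blast
  next
    case False
    then show ?thesis by (intro exI[of _ "w @ [y]"] exI[of _ 0]) simp
  qed
qed

lemma binary_word_cases:
  assumes "set w \<subseteq> {0, 1}"
  obtains (ones) k where "w = replicate k 1"
  | (block) u a b where "w = u @ replicate a 0 @ replicate b 1" "a \<ge> 1" "u = [] \<or> last u = 1"
proof -
  obtain v b where w: "w = v @ replicate b 1" and v: "v = [] \<or> last v \<noteq> 1"
    using split_trailing_run[of w 1] by blast
  obtain u a where vu: "v = u @ replicate a 0" and u: "u = [] \<or> last u \<noteq> 0"
    using split_trailing_run[of v 0] by blast
  show thesis
  proof (cases "v = []")
    case True
    then show ?thesis using w by (intro ones) simp
  next
    case False
    have "last v \<in> set w"
      using False w by simp
    then have "last v = 0"
      using v False assms by auto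
    then have "a \<ge> 1"
      using vu u False by (cases a) auto
    have "u = [] \<or> last u = 1"
    proof (cases "u = []")
      case False
      then have "last u \<in> set w"
        using w vu by simp
      then show ?thesis using u assms by auto
    qed simp
    with \<open>a \<ge> 1\<close> show ?thesis using w vu by (intro block) simp_all
  qed
qed

lemma q_decreasing_snoc_0:
  assumes "set w \<subseteq> {0, 1}" "q \<ge> 1"
  shows "q_decreasing q (w @ [0]) \<longleftrightarrow> q_decreasing q w"
proof -
  have ends_in_1: "q_decreasing q (v @ [0]) \<longleftrightarrow> q_decreasing q v" if "v = [] \<or> last v = 1" for v
    using q_decreasing_append_block[OF that, of 1 q 0] assms(2) by simp
  from assms(1) show ?thesis
  proof (cases rule: binary_word_cases)
    case (ones k)
    then have "w = [] \<or> last w = 1"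
      by (cases k) auto
    then show ?thesis using ends_in_1 by blast
  next
    case (block u a b)
    show ?thesis
    proof (cases b)
      case 0
      then have "w @ [0] = u @ replicate (Suc a) 0 @ replicate 0 1"
        using block(1) by (simp add: replicate_append_same)
      then have "q_decreasing q (w @ [0]) \<longleftrightarrow> q_decreasing q u \<and> 0 < q * Suc a"
        using q_decreasing_append_block[OF block(3), of "Suc a" q 0] by simp
      moreover have "q_decreasing q w \<longleftrightarrow> q_decreasing q u \<and> 0 < q * a"
        unfolding block(1) 0 by (rule q_decreasing_append_block[OF block(3,2)])
      ultimately show ?thesis
        using assms(2) block(2) by simp
    next
      case (Suc b')
      then have "last w = 1"
        using block(1) by simp
      then show ?thesis using ends_in_1 by blast
    qed
  qed
qed

lemma q_decreasing_append_block_snoc_1: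
  assumes "u = [] \<or> last u = 1" "a \<ge> 1"
  shows "q_decreasing q ((u @ replicate a 0 @ replicate b 1) @ [1]) \<longleftrightarrow>
    q_decreasing q u \<and> Suc b < q * a"
  using q_decreasing_append_block[OF assms, of q "Suc b"] by (simp add: replicate_append_same)

lemma q_decreasing_snoc_1_imp:
  assumes "set w \<subseteq> {0, 1}" "q_decreasing q (w @ [1])"
  shows "q_decreasing q w"
  using assms(1)
proof (cases rule: binary_word_cases)
  case (ones k)
  then show ?thesis by (simp add: q_decreasing_replicate_nonzero)
next
  case (block u a b)
  then show ?thesis
    using assms(2) q_decreasing_append_block[OF block(3,2)]
      q_decreasing_append_block_snoc_1[OF block(3,2)] by simp
qed

lemma q_decreasing_not_snoc_1_iff:
  assumes "set w \<subseteq> {0, 1}" "q \<ge> 1"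
  shows "q_decreasing q w \<and> \<not> q_decreasing q (w @ [1]) \<longleftrightarrow>
    (\<exists>u a. w = u @ replicate a 0 @ replicate (q * a - 1) 1 \<and> a \<ge> 1 \<and>
      (u = [] \<or> last u = 1) \<and> q_decreasing q u)"
proof
  assume w: "q_decreasing q w \<and> \<not> q_decreasing q (w @ [1])"
  from assms(1) show "\<exists>u a. w = u @ replicate a 0 @ replicate (q * a - 1) 1 \<and> a \<ge> 1 \<and>
      (u = [] \<or> last u = 1) \<and> q_decreasing q u"
  proof (cases rule: binary_word_cases)
    case (ones k)
    then have "w @ [1] = replicate (Suc k) 1"
      by (simp add: replicate_append_same)
    then show ?thesis using w q_decreasing_replicate_nonzero[of 1 q "Suc k"] by simp
  next
    case (block u a b)
    then have "b = q * a - 1" "q_decreasing q u"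
      using w q_decreasing_append_block[OF block(3,2)]
        q_decreasing_append_block_snoc_1[OF block(3,2)] by auto
    then show ?thesis using block by blast
  qed
next
  assume "\<exists>u a. w = u @ replicate a 0 @ replicate (q * a - 1) 1 \<and> a \<ge> 1 \<and>
      (u = [] \<or> last u = 1) \<and> q_decreasing q u"
  then obtain u a where w: "w = u @ replicate a 0 @ replicate (q * a - 1) 1"
    and a: "a \<ge> 1" and u: "u = [] \<or> last u = 1" "q_decreasing q u"
    by blast
  have "q * a \<ge> 1"
    using a assms(2) by simp
  then show "q_decreasing q w \<and> \<not> q_decreasing q (w @ [1])"
    using w u q_decreasing_append_block[OF u(1) a] q_decreasing_append_block_snoc_1[OF u(1) a]
    by simp
qed

definition sign_sum :: "nat list set \<Rightarrow> int" where
  "sign_sum A = (\<Sum>w\<in>A. (-1) ^ num_ones w)"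

lemma sign_sum_eq_card_diff:
  assumes "finite A"
  shows "sign_sum A =
    int (card {w \<in> A. even (num_ones w)}) - int (card {w \<in> A. odd (num_ones w)})"
proof -
  have "sign_sum A = (\<Sum>w\<in>A. if even (num_ones w) then 1 else - 1)"
    unfolding sign_sum_def by (rule sum.cong) auto
  then show ?thesis
    using assms by (simp add: sum.If_cases Int_def)
qed

lemma sign_sum_snoc_0: "sign_sum ((\<lambda>w. w @ [0]) ` A) = sign_sum A"
  by (simp add: sign_sum_def sum.reindex inj_on_def num_ones_def)

lemma sign_sum_snoc_1: "sign_sum ((\<lambda>w. w @ [1]) ` A) = - sign_sum A"
  by (simp add: sign_sum_def sum.reindex inj_on_def num_ones_def sum_negf)

lemma num_ones_append_block:
  "num_ones (u @ replicate a 0 @ replicate b 1) = num_ones u + b"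
  by (simp add: num_ones_def filter_replicate)

lemma finite_qdec_words: "finite (qdec_words q n)"
proof (rule finite_subset)
  show "qdec_words q n \<subseteq> {w. set w \<subseteq> {0, 1} \<and> length w = n}"
    by (auto simp: qdec_words_def)
qed (simp add: finite_lists_length_eq)

definition qdec_words_end1 :: "nat \<Rightarrow> nat \<Rightarrow> nat list set" where
  "qdec_words_end1 q n = {w \<in> qdec_words q n. w = [] \<or> last w = 1}"

lemma qdec_words_end1_Suc:
  "qdec_words_end1 q (Suc m) = (\<lambda>w. w @ [1]) ` {w \<in> qdec_words q m. q_decreasing q (w @ [1])}"
proof (intro equalityI subsetI)
  fix x assume "x \<in> qdec_words_end1 q (Suc m)"
  then have x: "length x = Suc m" "set x \<subseteq> {0, 1}" "q_decreasing q x" "x = [] \<or> last x = 1"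
    unfolding qdec_words_end1_def qdec_words_def by blast+
  then obtain w where xw: "x = w @ [1]"
    by (metis append_butlast_last_id length_0_conv nat.distinct(1))
  then have w: "length w = m" "set w \<subseteq> {0, 1}"
    using x(1,2) by auto
  then have "q_decreasing q w"
    using q_decreasing_snoc_1_imp x(3) xw by blast
  with w x(3) xw show "x \<in> (\<lambda>w. w @ [1]) ` {w \<in> qdec_words q m. q_decreasing q (w @ [1])}"
    unfolding qdec_words_def by blast
next
  fix x assume "x \<in> (\<lambda>w. w @ [1]) ` {w \<in> qdec_words q m. q_decreasing q (w @ [1])}"
  then obtain w where "x = w @ [1]" "w \<in> qdec_words q m" "q_decreasing q (w @ [1])"
    by blast
  then show "x \<in> qdec_words_end1 q (Suc m)"
    by (simp add: qdec_words_end1_def qdec_words_def)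
qed

lemma qdec_words_Suc:
  assumes "q \<ge> 1"
  shows "qdec_words q (Suc m) = (\<lambda>w. w @ [0]) ` qdec_words q m \<union> qdec_words_end1 q (Suc m)"
proof (intro equalityI subsetI)
  fix x assume x: "x \<in> qdec_words q (Suc m)"
  show "x \<in> (\<lambda>w. w @ [0]) ` qdec_words q m \<union> qdec_words_end1 q (Suc m)"
  proof (cases "last x = 1")
    case True
    with x show ?thesis
      by (simp add: qdec_words_end1_def)
  next
    case False
    from x have "length x = Suc m" "set x \<subseteq> {0, 1}" "q_decreasing q x"
      unfolding qdec_words_def by blast+
    moreover obtain w y where xw: "x = w @ [y]"
      using \<open>length x = Suc m\<close> by (metis length_Suc_conv_rev)
    ultimately have "y = 0" "length w = m" "set w \<subseteq> {0, 1}" "q_decreasing q (w @ [0])"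
      using False by auto
    then have "w \<in> qdec_words q m"
      using q_decreasing_snoc_0[OF _ assms] by (simp add: qdec_words_def)
    then show ?thesis
      using xw \<open>y = 0\<close> by blast
  qed
next
  fix x assume "x \<in> (\<lambda>w. w @ [0]) ` qdec_words q m \<union> qdec_words_end1 q (Suc m)"
  then show "x \<in> qdec_words q (Suc m)"
  proof
    assume "x \<in> (\<lambda>w. w @ [0]) ` qdec_words q m"
    then obtain w where "x = w @ [0]" "w \<in> qdec_words q m"
      by blast
    then show ?thesis
      using q_decreasing_snoc_0[OF _ assms] by (simp add: qdec_words_def)
  qed (simp add: qdec_words_end1_def)
qed

lemma sign_sum_qdec_words_Suc:
  assumes "q \<ge> 1"
  shows "sign_sum (qdec_words q (Suc m)) =
    sign_sum (qdec_words q m) + sign_sum (qdec_words_end1 q (Suc m))"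
proof -
  have "finite (qdec_words_end1 q (Suc m))"
    by (simp add: qdec_words_end1_def finite_qdec_words)
  moreover have "(\<lambda>w. w @ [0]) ` qdec_words q m \<inter> qdec_words_end1 q (Suc m) = {}"
    by (auto simp: qdec_words_end1_def)
  ultimately show ?thesis
    unfolding qdec_words_Suc[OF assms] sign_sum_def
    by (simp add: sum.union_disjoint finite_qdec_words sign_sum_snoc_0[unfolded sign_sum_def])
qed

lemma sign_sum_qdec_words_Suc_blocked:
  assumes "q \<ge> 1"
  shows "sign_sum (qdec_words q (Suc m)) =
    sign_sum {w \<in> qdec_words q m. \<not> q_decreasing q (w @ [1])}"
proof -
  let ?E = "{w \<in> qdec_words q m. q_decreasing q (w @ [1])}"
  have "sign_sum (qdec_words q m) = sign_sum (qdec_words q m - ?E) + sign_sum ?E"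
    unfolding sign_sum_def by (rule sum.subset_diff) (auto simp: finite_qdec_words)
  moreover have "qdec_words q m - ?E = {w \<in> qdec_words q m. \<not> q_decreasing q (w @ [1])}"
    by blast
  moreover have "sign_sum (qdec_words_end1 q (Suc m)) = - sign_sum ?E"
    by (simp only: qdec_words_end1_Suc sign_sum_snoc_1)
  ultimately show ?thesis
    by (simp add: sign_sum_qdec_words_Suc[OF assms])
qed

lemma length_trailing_ones_append_block:
  assumes "a \<ge> 1"
  shows "length (takeWhile (\<lambda>x. x = 1) (rev (u @ replicate a 0 @ replicate b (1::nat)))) = b"
  using assms by (cases a) (simp_all add: takeWhile_append)

definition append_full_block :: "nat \<Rightarrow> nat \<times> nat list \<Rightarrow> nat list" where
  "append_full_block q = (\<lambda>(a, u). u @ replicate a 0 @ replicate (q * a - 1) 1)"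

lemma inj_on_append_full_block:
  assumes "q \<ge> 1"
  shows "inj_on (append_full_block q) ({1..} \<times> UNIV)"
proof (rule inj_onI)
  fix x y :: "nat \<times> nat list"
  assume "x \<in> {1..} \<times> UNIV" "y \<in> {1..} \<times> UNIV"
  then obtain a u a' u' where xy: "x = (a, u)" "y = (a', u')" and a: "a \<ge> 1" "a' \<ge> 1"
    by auto
  assume "append_full_block q x = append_full_block q y"
  then have eq: "u @ replicate a 0 @ replicate (q * a - 1) 1 =
    u' @ replicate a' 0 @ replicate (q * a' - 1) 1"
    by (simp only: xy append_full_block_def prod.case)
  have "q * a - 1 = q * a' - 1"
    using arg_cong[OF eq, of "\<lambda>w. length (takeWhile (\<lambda>x. x = 1) (rev w))"]
    by (simp only: length_trailing_ones_append_block a)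
  moreover have "q * a > 0" "q * a' > 0"
    using a assms by simp_all
  ultimately have "q * a = q * a'"
    by arith
  then have "a = a'"
    using assms by simp
  with eq xy show "x = y"
    by simp
qed

lemma blocked_qdec_words_eq:
  assumes "q \<ge> 1"
  shows "{w \<in> qdec_words q m. \<not> q_decreasing q (w @ [1])} =
    append_full_block q ` (SIGMA a:{1..Suc m div Suc q}. qdec_words_end1 q (Suc m - Suc q * a))"
    (is "_ = append_full_block q ` ?S")
proof (intro equalityI subsetI)
  fix w assume "w \<in> {w \<in> qdec_words q m. \<not> q_decreasing q (w @ [1])}"
  then have w: "length w = m" "set w \<subseteq> {0, 1}" "q_decreasing q w" "\<not> q_decreasing q (w @ [1])"
    unfolding qdec_words_def by blast+
  then obtain u a where wu: "w = u @ replicate a 0 @ replicate (q * a - 1) 1"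
    and a: "a \<ge> 1" and u: "u = [] \<or> last u = 1" "q_decreasing q u"
    using q_decreasing_not_snoc_1_iff[OF w(2) assms] by blast
  have "q * a \<ge> 1"
    using a assms by simp
  moreover have "length u + a + (q * a - 1) = m"
    using wu w(1) by simp
  ultimately have "length u + a + q * a = Suc m"
    by arith
  then have len: "length u + Suc q * a = Suc m"
    by simp
  then have "a \<le> Suc m div Suc q"
    by (simp add: less_eq_div_iff_mult_less_eq mult.commute)
  moreover have "u \<in> qdec_words_end1 q (Suc m - Suc q * a)"
    using len u w(2) wu by (auto simp: qdec_words_end1_def qdec_words_def)
  ultimately show "w \<in> append_full_block q ` ?S"
    using wu a by (auto simp: append_full_block_def intro!: image_eqI[of _ _ "(a, u)"])
next
  fix w assume "w \<in> append_full_block q ` ?S"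
  then obtain a u where wu: "w = u @ replicate a 0 @ replicate (q * a - 1) 1"
    and a: "a \<ge> 1" "a \<le> Suc m div Suc q" and u: "u \<in> qdec_words_end1 q (Suc m - Suc q * a)"
    by (auto simp: append_full_block_def)
  have u: "length u = Suc m - Suc q * a" "set u \<subseteq> {0, 1}" "u = [] \<or> last u = 1" "q_decreasing q u"
    using u by (auto simp: qdec_words_end1_def qdec_words_def)
  have "a + q * a \<le> Suc m"
    using a(2) by (simp add: less_eq_div_iff_mult_less_eq mult.commute)
  moreover have "q * a \<ge> 1"
    using a assms by simp
  moreover have "length w = length u + a + (q * a - 1)"
    using wu by simp
  ultimately have "length w = m"
    using u(1) by simp
  moreover have sw: "set w \<subseteq> {0, 1}"
    using wu u(2) by auto
  moreover have "q_decreasing q w \<and> \<not> q_decreasing q (w @ [1])"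
    using q_decreasing_not_snoc_1_iff[OF sw assms] wu a(1) u(3,4) by blast
  ultimately show "w \<in> {w \<in> qdec_words q m. \<not> q_decreasing q (w @ [1])}"
    by (simp add: qdec_words_def)
qed

lemma sign_sum_qdec_words_Suc_eq_sum:
  assumes "q \<ge> 1"
  shows "sign_sum (qdec_words q (Suc m)) =
    (\<Sum>a=1..Suc m div Suc q. (-1) ^ (q * a - 1) * sign_sum (qdec_words_end1 q (Suc m - Suc q * a)))"
    (is "_ = ?rhs")
proof -
  let ?S = "SIGMA a:{1..Suc m div Suc q}. qdec_words_end1 q (Suc m - Suc q * a)"
  have "inj_on (append_full_block q) ?S"
    by (rule inj_on_subset[OF inj_on_append_full_block[OF assms]]) auto
  have "sign_sum (qdec_words q (Suc m)) = sign_sum (append_full_block q ` ?S)"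
    by (simp only: sign_sum_qdec_words_Suc_blocked[OF assms] blocked_qdec_words_eq[OF assms])
  also have "\<dots> = (\<Sum>p\<in>?S. (-1) ^ num_ones (append_full_block q p))"
    unfolding sign_sum_def sum.reindex[OF \<open>inj_on (append_full_block q) ?S\<close>] by simp
  also have "\<dots> = (\<Sum>(a, u)\<in>?S. (-1) ^ (q * a - 1) * (-1) ^ num_ones u)"
    by (rule sum.cong)
      (auto simp: append_full_block_def num_ones_append_block power_add simp del: One_nat_def)
  also have "\<dots> = ?rhs"
    by (simp add: sum.Sigma[symmetric] sign_sum_def sum_distrib_left qdec_words_end1_def
        finite_qdec_words)
  finally show ?thesis .
qed

lemma qdec_words_0: "qdec_words q 0 = {[]}"
  by (auto simp: qdec_words_def q_decreasing_def)

lemma sign_sum_qdec_words_0: "sign_sum (qdec_words q 0) = 1"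
  by (simp add: sign_sum_def qdec_words_0 num_ones_def)

lemma sign_sum_qdec_words_end1_0: "sign_sum (qdec_words_end1 q 0) = 1"
proof -
  have "qdec_words_end1 q 0 = {[]}"
    by (auto simp: qdec_words_end1_def qdec_words_0)
  then show ?thesis
    by (simp add: sign_sum_def num_ones_def)
qed

lemma sign_sum_qdec_words_le_q:
  assumes "q \<ge> 1" "1 \<le> n" "n \<le> q"
  shows "sign_sum (qdec_words q n) = 0"
proof -
  obtain m where "n = Suc m"
    using assms(2) by (cases n) auto
  moreover have "Suc m div Suc q = 0"
    using assms(3) \<open>n = Suc m\<close> by simp
  ultimately show ?thesis
    by (simp add: sign_sum_qdec_words_Suc_eq_sum[OF assms(1)])
qed

lemma sign_sum_qdec_words_Suc_q:
  assumes "q \<ge> 1"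
  shows "sign_sum (qdec_words q (Suc q)) = (-1) ^ (q - 1)"
  by (simp add: sign_sum_qdec_words_Suc_eq_sum[OF assms] sign_sum_qdec_words_end1_0)

lemma sign_sum_qdec_words_rec:
  assumes "q \<ge> 1"
  shows "sign_sum (qdec_words q (r + Suc (Suc q))) = (-1) ^ q * sign_sum (qdec_words q r)"
proof -
  define S where "S k = sign_sum (qdec_words q k)" for k
  have "r + Suc (Suc q) = Suc (Suc r + q)"
    by simp
  define g where
    "g a = (-1::int) ^ (q * a - 1) * sign_sum (qdec_words_end1 q (Suc (Suc r + q) - Suc q * a))"
    for a
  have "Suc (Suc r + q) div Suc q = Suc (Suc r div Suc q)"
    using div_add_self2[of "Suc q" "Suc r"] by simp
  moreover have "S (r + Suc (Suc q)) = sum g {1..Suc (Suc r + q) div Suc q}"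
    unfolding S_def g_def \<open>r + Suc (Suc q) = Suc (Suc r + q)\<close>
    by (rule sign_sum_qdec_words_Suc_eq_sum[OF assms])
  ultimately have "S (r + Suc (Suc q)) = sum g {1..Suc (Suc r div Suc q)}"
    by simp
  also have "\<dots> = g 1 + sum g {Suc 1..Suc (Suc r div Suc q)}"
    by (rule sum.atLeast_Suc_atMost) simp
  also have "sum g {Suc 1..Suc (Suc r div Suc q)} = (\<Sum>a=1..Suc r div Suc q. g (Suc a))"
    by (rule sum.shift_bounds_cl_Suc_ivl)
  also have "(\<Sum>a=1..Suc r div Suc q. g (Suc a)) = (-1) ^ q * S (Suc r)"
  proof -
    have "g (Suc a) =
        (-1) ^ q * ((-1) ^ (q * a - 1) * sign_sum (qdec_words_end1 q (Suc r - Suc q * a)))"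
      if "a \<ge> 1" for a
    proof -
      have "q * Suc a - 1 = q + (q * a - 1)"
        using that assms by (simp add: Suc_le_eq)
      then show ?thesis
        by (simp add: g_def power_add)
    qed
    then show ?thesis
      by (simp add: S_def sign_sum_qdec_words_Suc_eq_sum[OF assms] sum_distrib_left)
  qed
  also have "g 1 = (-1) ^ (q - 1) * (S (Suc r) - S r)"
    using sign_sum_qdec_words_Suc[OF assms, of r] by (simp add: g_def S_def)
  also have "(-1::int) ^ (q - 1) = - ((-1) ^ q)"
    using assms by (cases q) auto
  finally show ?thesis
    by (simp add: S_def algebra_simps)
qed

lemma abs_sign_sum_qdec_words_le_1:
  assumes "q \<ge> 1"
  shows "\<bar>sign_sum (qdec_words q n)\<bar> \<le> 1"
proof (induction n rule: less_induct)
  case (less n)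
  consider "n = 0" | "1 \<le> n" "n \<le> q" | "n = Suc q" | r where "n = r + Suc (Suc q)"
  proof -
    have "n = 0 \<or> 1 \<le> n \<and> n \<le> q \<or> n = Suc q \<or> n = (n - Suc (Suc q)) + Suc (Suc q)"
      by arith
    then show thesis
      using that by blast
  qed
  then show ?case
  proof cases
    case 1
    then show ?thesis by (simp add: sign_sum_qdec_words_0)
  next
    case 2
    then show ?thesis by (simp add: sign_sum_qdec_words_le_q[OF assms])
  next
    case 3
    then show ?thesis by (simp add: sign_sum_qdec_words_Suc_q[OF assms] abs_mult)
  next
    case (4 r)
    then have "\<bar>sign_sum (qdec_words q r)\<bar> \<le> 1"
      by (intro less.IH) simp
    then show ?thesis
      unfolding 4 sign_sum_qdec_words_rec[OF assms] by (simp add: abs_mult)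
  qed
qed

theorem corollary1:
  fixes n q :: nat
  assumes "q \<ge> 1"
  shows "int (card {w \<in> qdec_words q n. even (num_ones w)})
         - int (card {w \<in> qdec_words q n. odd (num_ones w)}) \<in> {-1, 0, 1}"
proof -
  have "\<bar>sign_sum (qdec_words q n)\<bar> \<le> 1"
    by (rule abs_sign_sum_qdec_words_le_1[OF assms])
  then show ?thesis
    using sign_sum_eq_card_diff[OF finite_qdec_words, of q n] by auto
qed

end
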